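(* Let $r>0$, $L\ge2$, and let $\mathcal D=\{({\bm{x}}_i,y_i)\}_{i=1}^n$, ${\bm{x}}_i\in\mathbb{R}^d$, $y_i\in[K]$, be a dataset that is $r$-separated with respect to the $\ell_\infty$-norm. Then there exists an $L$-layer $\ell_\infty$-distance net ${\bm{g}}:\mathbb{R}^d\to\mathbb{R}^K$ in which every hidden layer has at most $\lceil\frac{n}{L-1}\rceil+K+2d$ neurons, such that the margin-based certified $\ell_\infty$ robust accuracy on $\mathcal D$ under perturbation $\epsilon=r$ is $100\%$, i.e. $\mathsf{margin}({\bm{x}}_i,y_i;{\bm{g}})/2>r$ for every $i\in[n]$.
   Context: $r$-separation: $\mathcal D$ is $r$-separated w.r.t. $\ell_\infty$ if for all $i,j$ with $y_i\neq y_j$ one has $\|{\bm{x}}_i-{\bm{x}}_j\|_\infty>2r$. An $L$-layer $\ell_\infty$-distance net ${\bm{g}}$ with input ${\bm{x}}^{(0)}={\bm{x}}$ computes $x^{(l)}_i=\|{\bm{x}}^{(l-1)}-{\bm{w}}^{(l,i)}\|_\infty+b^{(l)}_i$ ($l\in[L]$, $i\in[n_l]$, arbitrary real parameters), with $n_L=K$ and ${\bm{g}}({\bm{x}})={\bm{x}}^{(L)}$; the hidden layers are $l=1,\dots,L-1$. The output margin is $\mathsf{margin}({\bm{x}},y;{\bm{g}})=[{\bm{g}}({\bm{x}})]_y-\max_{j\neq y}[{\bm{g}}({\bm{x}})]_j$. Margin-based certification declares $({\bm{x}},y)$ certifiably robust at level $\epsilon$ iff $\mathsf{margin}({\bm{x}},y;{\bm{g}})/2>\epsilon$.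 *)

theory Defs
  imports Complex_Main
begin

text \<open>Vectors in R^m are represented as functions nat => real, only the
  coordinates 0..m-1 being relevant. The l_inf norm of the first m coordinates
  (0 for m = 0).\<close>
definition linf_norm :: "nat \<Rightarrow> (nat \<Rightarrow> real) \<Rightarrow> real" where
  "linf_norm m v = Max (insert 0 ((\<lambda>j. \<bar>v j\<bar>) ` {..<m}))"

text \<open>A neuron of an l_inf-distance net: weight vector w and bias b,
  computing u |-> ||u - w||_inf + b.  A layer is a list of neurons.\<close>
type_synonym neuron = "(nat \<Rightarrow> real) \<times> real"
type_synonym layer = "neuron list"

definition eval_layer :: "nat \<Rightarrow> layer \<Rightarrow> (nat \<Rightarrow> real) \<Rightarrow> (nat \<Rightarrow> real)" where
  "eval_layer m ly u = (\<lambda>i. if i < length ly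
      then linf_norm m (\<lambda>j. u j - fst (ly ! i) j) + snd (ly ! i) else 0)"

fun eval_net :: "nat \<Rightarrow> layer list \<Rightarrow> (nat \<Rightarrow> real) \<Rightarrow> (nat \<Rightarrow> real)" where
  "eval_net m [] u = u"
| "eval_net m (ly # lys) u = eval_net (length ly) lys (eval_layer m ly u)"

definition margin :: "nat \<Rightarrow> (nat \<Rightarrow> real) \<Rightarrow> nat \<Rightarrow> real" where
  "margin K g y = g y - Max ((\<lambda>j. g j) ` ({..<K} - {y}))"

definition r_separated :: "real \<Rightarrow> nat \<Rightarrow> nat \<Rightarrow> (nat \<Rightarrow> nat \<Rightarrow> real) \<Rightarrow> (nat \<Rightarrow> nat) \<Rightarrow> bool" where
  "r_separated r d n x y \<longleftrightarrow>
     (\<forall>i<n. \<forall>j<n. y i \<noteq> y j \<longrightarrow> linf_norm d (\<lambda>k. x i k - x j k) > 2 * r)"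

end

theory Submission
  imports Defs
begin

text \<open>Split the data into L - 1 blocks of ceil(n/(L-1)) points. Every hidden layer carries the
  input coordinates with both signs, one running score per class, and the distances to the points
  of the next block. An l_inf neuron whose weights sit far away (offset H) on a set S of
  coordinates computes a maximum of affine functions of those coordinates; this suffices to copy
  coordinates, to replace the score of class c by the maximum of itself and the negated distances
  to the class-c points of the previous block, and to recompute distances from the signed
  coordinates. In the end the score of class c at x_i is the maximum of a very negative baseline
  and of -||x_i - x_j|| over the points x_j of class c: it is at least 0 for the own class (take
  j = i) and below -2r for every other class by r-separation, so the margin exceeds 2r.\<close>

definition eval_neuron :: "nat \<Rightarrow> neuron \<Rightarrow> (nat \<Rightarrow> real) \<Rightarrow> real" where
  "eval_neuron m nr u = linf_norm m (\<lambda>j. u j - fst nr j) + snd nr"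

lemma eval_layer_nth: "i < length ly \<Longrightarrow> eval_layer m ly u i = eval_neuron m (ly ! i) u"
  by (simp add: eval_layer_def eval_neuron_def)

lemma eval_net_induct:
  assumes "ls \<noteq> []"
    and "P 0 (eval_layer m (hd ls) u)"
    and "\<And>l v. Suc l < length ls \<Longrightarrow> P l v \<Longrightarrow>
           P (Suc l) (eval_layer (length (ls ! l)) (ls ! Suc l) v)"
  shows "P (length ls - 1) (eval_net m ls u)"
  using assms
proof (induction ls arbitrary: m u P)
  case Nil
  then show ?case by simp
next
  case (Cons ly lys)
  show ?case
  proof (cases "lys = []")
    case True
    then show ?thesis using Cons.prems(2) by simp
  next
    case False
    have "P (Suc (length lys - 1)) (eval_net (length ly) lys (eval_layer m ly u))"
    proof (rule Cons.IH[where P = "\<lambda>l. P (Suc l)"])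
      show "P (Suc 0) (eval_layer (length ly) (hd lys) (eval_layer m ly u))"
        using Cons.prems(3)[of 0] Cons.prems(2) False by (simp add: hd_conv_nth)
    next
      fix l v
      assume "Suc l < length lys" "P (Suc l) v"
      then show "P (Suc (Suc l)) (eval_layer (length (lys ! l)) (lys ! Suc l) v)"
        using Cons.prems(3)[of "Suc l" v] by simp
    qed (use False in simp)
    then show ?thesis using False by simp
  qed
qed

lemma abs_le_linf_norm: "k < m \<Longrightarrow> \<bar>v k\<bar> \<le> linf_norm m v"
  unfolding linf_norm_def by (intro Max_ge) auto

lemma linf_norm_le: "0 \<le> b \<Longrightarrow> (\<And>k. k < m \<Longrightarrow> \<bar>v k\<bar> \<le> b) \<Longrightarrow> linf_norm m v \<le> b"
  unfolding linf_norm_def by (intro Max.boundedI) auto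

lemma linf_norm_nonneg: "0 \<le> linf_norm m v"
  unfolding linf_norm_def by (intro Max_ge) auto

lemma linf_norm_eq_0: "(\<And>k. k < m \<Longrightarrow> v k = 0) \<Longrightarrow> linf_norm m v = 0"
  by (intro antisym linf_norm_le linf_norm_nonneg) auto

definition signed_coords :: "nat \<Rightarrow> (nat \<Rightarrow> real) \<Rightarrow> nat \<Rightarrow> real" where
  "signed_coords d v k = (if k < d then v k else - v (k - d))"

lemma Max_signed_coords:
  assumes "0 < d"
  shows "Max (signed_coords d v ` {..<2*d}) = linf_norm d v" (is "?M = _")
proof (rule antisym)
  have fin: "finite (signed_coords d v ` {..<2*d})" "signed_coords d v ` {..<2*d} \<noteq> {}"
    using assms by (auto simp: lessThan_empty_iff)
  have ge: "signed_coords d v k \<le> ?M" if "k < 2*d" for k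
    using fin that by (intro Max_ge) auto
  show "?M \<le> linf_norm d v"
  proof (rule Max.boundedI[OF fin], clarify)
    fix k assume "k < 2*d"
    then have "k - d < d" by simp
    then show "signed_coords d v k \<le> linf_norm d v"
      using abs_le_linf_norm[of k d v] abs_le_linf_norm[of "k - d" d v]
      by (auto simp: signed_coords_def)
  qed
  have pm: "v k \<le> ?M \<and> - v k \<le> ?M" if "k < d" for k
  proof -
    have "signed_coords d v k = v k" "signed_coords d v (d + k) = - v k"
      using that by (simp_all add: signed_coords_def)
    then show ?thesis using ge[of k] ge[of "d + k"] that by simp
  qed
  show "linf_norm d v \<le> ?M"
  proof (rule linf_norm_le)
    show "0 \<le> ?M" using pm[OF assms] by linarith
  next
    fix k assume "k < d"
    then show "\<bar>v k\<bar> \<le> ?M" using pm by (simp add: abs_le_iff)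
  qed
qed

text \<open>Shifting the weights on S by H far in the direction -s makes these coordinates dominate
  the l_inf norm with a known sign, so the neuron computes a maximum of affine functions.\<close>
definition max_neuron :: "real \<Rightarrow> nat set \<Rightarrow> (nat \<Rightarrow> real) \<Rightarrow> (nat \<Rightarrow> real) \<Rightarrow> neuron" where
  "max_neuron H S s a = ((\<lambda>j. if j \<in> S then s j * (a j - H) else 0), - H)"

lemma eval_max_neuron:
  fixes u a s :: "nat \<Rightarrow> real"
  assumes S: "S \<subseteq> {..<m}" "S \<noteq> {}"
    and sign: "\<And>j. j \<in> S \<Longrightarrow> s j = 1 \<or> s j = -1"
    and u_bound: "\<And>j. j < m \<Longrightarrow> \<bar>u j\<bar> \<le> R"
    and a_bound: "\<And>j. j \<in> S \<Longrightarrow> \<bar>a j\<bar> \<le> R"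
    and H: "3 * R < H"
  shows "eval_neuron m (max_neuron H S s a) u = Max ((\<lambda>j. s j * u j - a j) ` S)"
proof -
  define w where "w j = u j - fst (max_neuron H S s a) j" for j
  define M where "M = Max ((\<lambda>j. s j * u j - a j) ` S)"
  have fin: "finite S" using S(1) finite_subset by blast
  have "M \<in> (\<lambda>j. s j * u j - a j) ` S" unfolding M_def using fin S(2) by (intro Max_in) auto
  then obtain j0 where j0: "j0 \<in> S" "M = s j0 * u j0 - a j0" by auto
  have w_in_S: "\<bar>w j\<bar> = s j * u j - a j + H" if "j \<in> S" for j
  proof -
    have "s j = 1 \<or> s j = -1" "\<bar>u j\<bar> \<le> R" "\<bar>a j\<bar> \<le> R"
      using sign u_bound a_bound S(1) that by auto
    then show ?thesis using H that by (auto simp: w_def max_neuron_def abs_real_def split: if_splits)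
  qed
  have R: "\<bar>u j0\<bar> \<le> R" "\<bar>a j0\<bar> \<le> R" "s j0 = 1 \<or> s j0 = -1"
    using u_bound a_bound sign S(1) j0(1) by auto
  then have M_low: "- 2 * R \<le> M" using j0(2) by (auto simp: abs_le_iff)
  have "linf_norm m w \<le> M + H"
  proof (rule linf_norm_le)
    show "0 \<le> M + H" using M_low H R(1) by linarith
  next
    fix j assume j: "j < m"
    show "\<bar>w j\<bar> \<le> M + H"
    proof (cases "j \<in> S")
      case True
      then show ?thesis using w_in_S fin unfolding M_def by simp
    next
      case False
      then show ?thesis using u_bound[OF j] M_low H R(1) by (simp add: w_def max_neuron_def)
    qed
  qed
  moreover have "M + H \<le> linf_norm m w"
    using abs_le_linf_norm[of j0 m w] w_in_S[OF j0(1)] j0 S(1) by auto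
  ultimately show ?thesis
    unfolding eval_neuron_def M_def w_def by (simp add: max_neuron_def)
qed

lemma margin_gt:
  fixes g :: "nat \<Rightarrow> real"
  assumes "2 \<le> K" "y < K" "\<And>c. c < K \<Longrightarrow> c \<noteq> y \<Longrightarrow> g c < b" "a \<le> g y"
  shows "a - b < margin K g y"
proof -
  have "(if y = 0 then 1 else 0) \<in> {..<K} - {y}" using assms(1,2) by auto
  then have "Max (g ` ({..<K} - {y})) < b"
    using assms(3) by (subst Max_less_iff) auto
  then show ?thesis using assms(4) unfolding margin_def by simp
qed

lemma finite_abs_bounded: "finite A \<Longrightarrow> \<exists>R. \<forall>z\<in>A. \<bar>f z\<bar> \<le> (R :: real)"
  by (rule exI[of _ "\<Sum>z\<in>A. \<bar>f z\<bar>"]) (auto intro: member_le_sum)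

locale linf_net_construction =
  fixes d K N L n :: nat and B :: real
    and x :: "nat \<Rightarrow> nat \<Rightarrow> real" and y :: "nat \<Rightarrow> nat"
begin

definition width :: nat where
  "width = 2*d + K + N"

definition point_dist :: "nat \<Rightarrow> nat \<Rightarrow> real" where
  "point_dist i p = linf_norm d (\<lambda>k. x i k - x p k)"

definition batch :: "nat \<Rightarrow> nat \<Rightarrow> nat set" where
  "batch l c = {t. t < N \<and> l*N + t < n \<and> y (l*N + t) = c}"

fun score :: "nat \<Rightarrow> nat \<Rightarrow> nat \<Rightarrow> real" where
  "score 0 c i = linf_norm d (x i) - B"
| "score (Suc l) c i = Max (insert (score l c i) ((\<lambda>t. - point_dist i (l*N + t)) ` batch l c))"

text \<open>The intended output of neuron j of layer l on input x i; the output layer consists of the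
  score neurons j = 2*d + c only.\<close>
definition activation :: "nat \<Rightarrow> nat \<Rightarrow> nat \<Rightarrow> real" where
  "activation l i j =
     (if j < 2*d then signed_coords d (x i) j
      else if j < 2*d + K then score l (j - 2*d) i
      else point_dist i (l*N + (j - 2*d - K)))"

lemma finite_batch: "finite (batch l c)"
  unfolding batch_def by auto

lemma score_Suc_ge: "score l c i \<le> score (Suc l) c i"
  by (simp add: finite_batch)

lemma score_own_class_nonneg:
  assumes "i < n" "i < l*N"
  shows "0 \<le> score l (y i) i"
  using assms(2)
proof (induction l)
  case 0
  then show ?case by simp
next
  case (Suc l)
  show ?case
  proof (cases "i < l*N")
    case True
    then show ?thesis using Suc.IH score_Suc_ge[of l "y i" i] by linarith
  next
    case False
    then have "i - l*N \<in> batch l (y i)" "l*N + (i - l*N) = i"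
      using Suc.prems assms(1) by (auto simp: batch_def)
    moreover have "point_dist i i = 0"
      unfolding point_dist_def by (rule linf_norm_eq_0) simp
    ultimately show ?thesis using finite_batch by (force intro: Max_ge)
  qed
qed

lemma score_other_class_lt:
  assumes "r_separated r d n x y" "i < n" "c \<noteq> y i" "linf_norm d (x i) - B < -2*r"
  shows "score l c i < -2*r"
proof (induction l)
  case 0
  then show ?case using assms(4) by simp
next
  case (Suc l)
  have "- point_dist i (l*N + t) < -2*r" if "t \<in> batch l c" for t
    using that assms(1-3) unfolding batch_def point_dist_def r_separated_def by auto
  then show ?case using Suc.IH by (simp add: finite_batch)
qed

end

locale linf_net_realization = linf_net_construction +
  fixes R H :: real
  assumes dim_pos: "0 < d"
    and layers: "2 \<le> L"
    and bound_nonneg: "0 \<le> R"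
    and activation_bound: "\<And>l i j. l < L \<Longrightarrow> i < n \<Longrightarrow> j < width \<Longrightarrow> \<bar>activation l i j\<bar> \<le> R"
    and point_bound: "\<And>p k. p < L*N \<Longrightarrow> k < d \<Longrightarrow> \<bar>x p k\<bar> \<le> R"
      \<comment> \<open>the last block may be incomplete: its distance neurons refer to some p \<ge> n\<close>
    and offset_large: "3 * R < H"
begin

definition neuron :: "nat \<Rightarrow> nat \<Rightarrow> neuron" where
  "neuron l j =
     (if l = 0 then
        (if j < d then max_neuron H {j} (\<lambda>_. 1) (\<lambda>_. 0)
         else if j < 2*d then max_neuron H {j - d} (\<lambda>_. -1) (\<lambda>_. 0)
         else if j < 2*d + K then ((\<lambda>_. 0), - B)
         else (x (j - 2*d - K), 0))
      else
        (if j < 2*d then max_neuron H {j} (\<lambda>_. 1) (\<lambda>_. 0)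
         else if j < 2*d + K then
           max_neuron H (insert j ((+) (2*d + K) ` batch (l - 1) (j - 2*d)))
             (\<lambda>k. if k = j then 1 else -1) (\<lambda>_. 0)
         else max_neuron H {..<2*d} (\<lambda>_. 1) (signed_coords d (x (l*N + (j - 2*d - K))))))"

definition layer :: "nat \<Rightarrow> layer" where
  "layer l = (if l < L - 1 then map (neuron l) [0..<width]
              else map (\<lambda>c. neuron l (2*d + c)) [0..<K])"

definition net :: "layer list" where
  "net = map layer [0..<L]"

lemma length_net: "length net = L"
  by (simp add: net_def)

lemma length_hidden_layer: "l < L - 1 \<Longrightarrow> length (net ! l) = width"
  by (simp add: net_def layer_def)

lemma length_output_layer: "length (net ! (L - 1)) = K"
  using layers by (simp add: net_def layer_def)

lemma eval_input_neuron:
  assumes i: "i < n" and j: "j < width"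
  shows "eval_neuron d (neuron 0 j) (x i) = activation 0 i j"
proof -
  have x_bound: "\<bar>x i k\<bar> \<le> R" if "k < d" for k
    using activation_bound[of 0 i k] layers i that by (simp add: activation_def signed_coords_def width_def)
  consider "j < d" | "d \<le> j" "j < 2*d" | "2*d \<le> j" "j < 2*d + K" | "2*d + K \<le> j" by linarith
  then show ?thesis
  proof cases
    case 1
    then show ?thesis
      using eval_max_neuron[of "{j}" d "\<lambda>_. 1" "x i" R "\<lambda>_. 0" H]
        x_bound bound_nonneg offset_large
      by (simp add: neuron_def activation_def signed_coords_def)
  next
    case 2
    then show ?thesis
      using eval_max_neuron[of "{j - d}" d "\<lambda>_. -1" "x i" R "\<lambda>_. 0" H]
        x_bound bound_nonneg offset_large
      by (simp add: neuron_def activation_def signed_coords_def)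
  next
    case 3
    then show ?thesis by (simp add: neuron_def activation_def eval_neuron_def)
  next
    case 4
    then show ?thesis by (simp add: neuron_def activation_def eval_neuron_def point_dist_def)
  qed
qed

lemma eval_hidden_neuron:
  assumes i: "i < n" and l: "0 < l" "l < L" and j: "j < width"
    and u: "\<And>k. k < width \<Longrightarrow> u k = activation (l - 1) i k"
  shows "eval_neuron width (neuron l j) u = activation l i j"
proof -
  have u_bound: "\<bar>u k\<bar> \<le> R" if "k < width" for k
    using activation_bound[of "l - 1" i k] u[OF that] i l that by simp
  consider "j < 2*d" | "2*d \<le> j" "j < 2*d + K" | "2*d + K \<le> j" by linarith
  then show ?thesis
  proof cases
    case 1
    then show ?thesis
      using eval_max_neuron[of "{j}" width "\<lambda>_. 1" u R "\<lambda>_. 0" H]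
        u_bound u[OF j] j l bound_nonneg offset_large
      by (simp add: neuron_def activation_def)
  next
    case 2
    define c where "c = j - 2*d"
    define S where "S = insert j ((+) (2*d + K) ` batch (l - 1) c)"
    have "neuron l j = max_neuron H S (\<lambda>k. if k = j then 1 else -1) (\<lambda>_. 0)"
      using 2 l by (simp add: neuron_def S_def c_def)
    also have "eval_neuron width \<dots> u = Max ((\<lambda>k. (if k = j then 1 else -1) * u k - 0) ` S)"
      by (intro eval_max_neuron[where R = R] u_bound offset_large)
        (use j bound_nonneg in \<open>auto simp: S_def batch_def width_def\<close>)
    also have "(\<lambda>k. (if k = j then 1 else -1) * u k - 0) ` S
        = insert (score (l - 1) c i) ((\<lambda>t. - point_dist i ((l - 1)*N + t)) ` batch (l - 1) c)"
      using 2 j u unfolding S_def c_def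
      by (auto simp: image_image activation_def batch_def width_def intro!: image_cong)
    also have "Max \<dots> = score l c i"
      using l by (cases l) auto
    finally show ?thesis using 2 by (simp add: activation_def c_def)
  next
    case 3
    define p where "p = l*N + (j - 2*d - K)"
    have "p < L*N"
    proof -
      have "p < Suc l * N" using j 3 unfolding p_def width_def by simp
      also have "\<dots> \<le> L*N" using l by (intro mult_le_mono1) simp
      finally show ?thesis .
    qed
    have "neuron l j = max_neuron H {..<2*d} (\<lambda>_. 1) (signed_coords d (x p))"
      using 3 l by (simp add: neuron_def p_def)
    also have "eval_neuron width \<dots> u = Max ((\<lambda>k. 1 * u k - signed_coords d (x p) k) ` {..<2*d})"
      using \<open>p < L*N\<close> dim_pos
      by (intro eval_max_neuron[where R = R] u_bound offset_large)
        (auto simp: signed_coords_def width_def point_bound lessThan_empty_iff)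
    also have "\<dots> = Max (signed_coords d (\<lambda>k. x i k - x p k) ` {..<2*d})"
      using u by (intro arg_cong[where f = Max] image_cong) (auto simp: activation_def signed_coords_def width_def)
    also have "\<dots> = activation l i j"
      using 3 dim_pos by (simp add: Max_signed_coords activation_def point_dist_def p_def)
    finally show ?thesis .
  qed
qed

lemma eval_net_score:
  assumes i: "i < n" and c: "c < K"
  shows "eval_net d net (x i) c = score (L - 1) c i"
proof -
  define P where "P l v \<longleftrightarrow> (if l < L - 1 then \<forall>k<width. v k = activation l i k
                              else \<forall>c<K. v c = score l c i)" for l v
  have "P (length net - 1) (eval_net d net (x i))"
  proof (rule eval_net_induct)
    show "net \<noteq> []" using layers by (simp add: net_def)
    have "hd net = map (neuron 0) [0..<width]"
      using layers by (simp add: net_def layer_def hd_map upt_conv_Cons)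
    then show "P 0 (eval_layer d (hd net) (x i))"
      using layers by (simp add: P_def eval_layer_nth eval_input_neuron i)
  next
    fix l v assume l: "Suc l < length net" and "P l v"
    then have hidden: "l < L - 1" by (simp add: length_net)
    then have v: "v k = activation (Suc l - 1) i k" if "k < width" for k
      using that \<open>P l v\<close> by (simp add: P_def)
    have net_l: "net ! Suc l = layer (Suc l)" "length (net ! l) = width"
      using l hidden by (simp_all add: net_def layer_def length_net)
    show "P (Suc l) (eval_layer (length (net ! l)) (net ! Suc l) v)"
    proof (cases "Suc l < L - 1")
      case True
      then show ?thesis
        using eval_hidden_neuron[OF i _ _ _ v] l
        by (simp add: P_def net_l layer_def eval_layer_nth length_net)
    next
      case False
      have "eval_neuron width (neuron (Suc l) (2*d + c)) v = score (Suc l) c i" if "c < K" for c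
        using eval_hidden_neuron[OF i _ _ _ v, of "2*d + c"] l that
        by (simp add: length_net width_def activation_def)
      then show ?thesis
        using False by (simp add: P_def net_l layer_def eval_layer_nth)
    qed
  qed
  then show ?thesis using c layers by (simp add: P_def length_net)
qed

lemma margin_gt_twice_radius:
  assumes sep: "r_separated r d n x y" and "2 \<le> K" and labels: "\<forall>i<n. y i < K"
    and covered: "n \<le> (L - 1) * N"
    and baseline: "\<And>i. i < n \<Longrightarrow> linf_norm d (x i) - B < -2*r"
    and i: "i < n"
  shows "2*r < margin K (eval_net d net (x i)) (y i)"
proof -
  have "0 - -2*r < margin K (eval_net d net (x i)) (y i)"
  proof (rule margin_gt)
    show "\<And>c. c < K \<Longrightarrow> c \<noteq> y i \<Longrightarrow> eval_net d net (x i) c < -2*r"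
      using eval_net_score score_other_class_lt[OF sep i _ baseline[OF i]] i by simp
    show "0 \<le> eval_net d net (x i) (y i)"
      using eval_net_score score_own_class_nonneg[of i "L - 1"] i labels covered by simp
  qed (use assms in auto)
  then show ?thesis by simp
qed

end

lemma exists_margin_net:
  assumes "0 < d" "2 \<le> L" "2 \<le> K" "\<forall>i<n. y i < K" "r_separated r d n x y"
    and "n \<le> (L - 1) * N"
  shows "\<exists>net. length net = L \<and> (\<forall>l<L - 1. length (net ! l) = 2*d + K + N) \<and>
           length (net ! (L - 1)) = K \<and>
           (\<forall>i<n. 2*r < margin K (eval_net d net (x i)) (y i))"
proof -
  obtain Rx where Rx: "\<forall>i\<in>{..<n}. \<bar>linf_norm d (x i)\<bar> \<le> Rx"
    using finite_abs_bounded[of "{..<n}" "\<lambda>i. linf_norm d (x i)"] by blast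
  define B where "B = Rx + 2*r + 1"
  interpret linf_net_construction d K N L n B x y .
  obtain R1 where R1: "\<forall>(l, i, j)\<in>{..<L} \<times> {..<n} \<times> {..<width}. \<bar>activation l i j\<bar> \<le> R1"
    using finite_abs_bounded[of "{..<L} \<times> {..<n} \<times> {..<width}" "\<lambda>(l, i, j). activation l i j"]
    by auto
  obtain R2 where R2: "\<forall>(p, k)\<in>{..<L*N} \<times> {..<d}. \<bar>x p k\<bar> \<le> R2"
    using finite_abs_bounded[of "{..<L*N} \<times> {..<d}" "\<lambda>(p, k). x p k"] by auto
  define R where "R = \<bar>R1\<bar> + \<bar>R2\<bar>"
  interpret linf_net_realization d K N L n B x y R "3*R + 1"
  proof unfold_locales
    show "0 < d" "2 \<le> L" using assms by simp_all
    show "0 \<le> R" "3*R < 3*R + 1" unfolding R_def by simp_all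
  next
    fix l i j assume "l < L" "i < n" "j < width"
    then have "\<bar>activation l i j\<bar> \<le> R1" using R1 by auto
    then show "\<bar>activation l i j\<bar> \<le> R" unfolding R_def by linarith
  next
    fix p k assume "p < L*N" "k < d"
    then have "\<bar>x p k\<bar> \<le> R2" using R2 by auto
    then show "\<bar>x p k\<bar> \<le> R" unfolding R_def by linarith
  qed
  have baseline: "linf_norm d (x i) - B < -2*r" if "i < n" for i
  proof -
    have "\<bar>linf_norm d (x i)\<bar> \<le> Rx" using Rx that by simp
    then show ?thesis unfolding B_def by linarith
  qed
  have "2*r < margin K (eval_net d net (x i)) (y i)" if "i < n" for i
    using margin_gt_twice_radius[OF assms(5,3,4,6) baseline that] .
  then show ?thesis
    using length_net length_hidden_layer length_output_layer unfolding width_def by blast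
qed

lemma eval_zero_layer:
  "(\<And>j. j < m \<Longrightarrow> u j = 0) \<Longrightarrow> eval_layer m [((\<lambda>_. 0), 0)] u = (\<lambda>_. 0)"
  unfolding eval_layer_def by (auto simp: linf_norm_eq_0)

lemma eval_zero_layers:
  "(\<And>j. j < m \<Longrightarrow> u j = 0) \<Longrightarrow>
     eval_net m (replicate (Suc k) [((\<lambda>_. 0), 0)] @ rest) u = eval_net 1 rest (\<lambda>_. 0)"
proof (induction k arbitrary: m u)
  case 0
  then show ?case by (simp add: eval_zero_layer)
next
  case (Suc k)
  then show ?case using Suc.IH[of 1 "\<lambda>_. 0"] by (simp add: eval_zero_layer)
qed

text \<open>In dimension 0 all points coincide, so separation forces a single label and constant
  outputs suffice.\<close>
lemma exists_margin_net_zero_dim: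
  assumes "0 < r" "2 \<le> L" "2 \<le> K" "\<forall>i<n. y i < K" "r_separated r 0 n x y"
  shows "\<exists>net. length net = L \<and> (\<forall>l<L - 1. length (net ! l) = 1) \<and>
           length (net ! (L - 1)) = K \<and>
           (\<forall>i<n. 2*r < margin K (eval_net 0 net (x i)) (y i))"
proof -
  define out :: layer where "out = map (\<lambda>c. ((\<lambda>_. 0), if c = y 0 then 3*r else 0)) [0..<K]"
  define net where "net = replicate (L - 1) [((\<lambda>_. 0), 0)] @ [out]"
  have single_label: "y i = y 0" if i: "i < n" for i
  proof (rule ccontr)
    assume "y i \<noteq> y 0"
    then have "2*r < linf_norm 0 (\<lambda>k. x i k - x 0 k)"
      using assms(5) i unfolding r_separated_def by blast
    moreover have "linf_norm 0 (\<lambda>k. x i k - x 0 k) = 0" by (rule linf_norm_eq_0) simp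
    ultimately show False using assms(1) by simp
  qed
  have "L - 1 = Suc (L - 2)" using assms(2) by simp
  then have "net = replicate (Suc (L - 2)) [((\<lambda>_. 0), 0)] @ [out]"
    by (simp only: net_def)
  then have "eval_net 0 net u = eval_layer 1 out (\<lambda>_. 0)" for u
    using eval_zero_layers[of 0 u "L - 2" "[out]"] by simp
  then have eval: "eval_net 0 net u c = (if c = y 0 then 3*r else 0)" if "c < K" for u c
    using that linf_norm_eq_0[of 1 "\<lambda>_. 0"] by (simp add: eval_layer_def out_def)
  have "3*r - r < margin K (eval_net 0 net (x i)) (y i)" if "i < n" for i
    by (rule margin_gt) (use assms that single_label[OF that] eval in auto)
  moreover have "length net = L" "\<forall>l<L - 1. length (net ! l) = 1" "length (net ! (L - 1)) = K"
    using assms(2) by (auto simp: net_def nth_append out_def)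
  ultimately show ?thesis by auto
qed

lemma le_mult_ceiling_div: "0 < m \<Longrightarrow> n \<le> m * nat \<lceil>real n / real m\<rceil>"
proof -
  assume m: "0 < m"
  have "real n = real m * (real n / real m)" using m by simp
  also have "\<dots> \<le> real m * of_int \<lceil>real n / real m\<rceil>"
    by (intro mult_left_mono le_of_int_ceiling) simp
  also have "\<dots> \<le> real m * real (nat \<lceil>real n / real m\<rceil>)"
    by (intro mult_left_mono) simp_all
  finally show ?thesis by (simp only: of_nat_mult [symmetric] of_nat_le_iff)
qed

theorem mainTheorem5:
  fixes r :: real and L d n K :: nat
    and x :: "nat \<Rightarrow> nat \<Rightarrow> real" and y :: "nat \<Rightarrow> nat"
  assumes "r > 0" and "L \<ge> 2" and "K \<ge> 2"
    and "\<forall>i<n. y i < K"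
    and "r_separated r d n x y"
  shows "\<exists>net :: layer list.
           length net = L \<and>
           (\<forall>l < L - 1. length (net ! l) \<le>
               nat \<lceil>real n / real (L - 1)\<rceil> + K + 2 * d) \<and>
           length (net ! (L - 1)) = K \<and>
           (\<forall>i<n. margin K (eval_net d net (x i)) (y i) / 2 > r)"
proof (cases "d = 0")
  case True
  then obtain net where "length net = L" "\<forall>l<L - 1. length (net ! l) = 1"
    "length (net ! (L - 1)) = K" "\<forall>i<n. 2*r < margin K (eval_net d net (x i)) (y i)"
    using exists_margin_net_zero_dim[of r L K n y x] assms by auto
  then show ?thesis using assms(3) by (intro exI[of _ net]) auto
next
  case False
  define N where "N = nat \<lceil>real n / real (L - 1)\<rceil>"
  have "n \<le> (L - 1) * N"
    unfolding N_def using assms(2) by (intro le_mult_ceiling_div) simp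
  then obtain net where "length net = L" "\<forall>l<L - 1. length (net ! l) = 2*d + K + N"
    "length (net ! (L - 1)) = K" "\<forall>i<n. 2*r < margin K (eval_net d net (x i)) (y i)"
    using exists_margin_net[of d L K n y r x N] False assms by auto
  then show ?thesis by (intro exI[of _ net]) (auto simp: N_def)
qed

end
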